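(* Fix $\alpha>1$, $R>0$, $T>1$ and $\beta,\delta,\mu>0$ with $K_{max}:=\min\big(\frac T4,\frac1{3\mu},\frac{3\beta}{2\mu}\big)>10$. For $\rho_r>0$ let $\Theta(\rho_r)=(\alpha,\rho_r,\beta\rho_r,\delta\rho_r,\mu\rho_r,T)$. Consider the set $I$ of $\rho_r>0$ satisfying $$\rho_r>\frac{\alpha}{2\delta},\qquad \rho_r>\frac{3\alpha}{4(1+\beta)^2R}g^2\Big(\frac{4R}{3K_{max}}\Big),\qquad \rho_r<\frac{\alpha}{(1+\beta)^2}\frac{g^2(R)}{R}.$$ Then on $I$, both $K'_{csi}(R,\Theta(\rho_r))$ and $M'_{csi}(R,\Theta(\rho_r))$ increase monotonically as $\rho_r$ decreases.
   Context: $g(x)=\sqrt{\frac{x}{2^x-1}}\big(2^x x\ln2-2^x+1\big)$, $x>0$. For $\Theta=(\alpha,\rho_r,\rho_d,\rho_s,\rho_0,T)$ and real $M>K\ge1$, $\frac{1}{\zeta_{csi}(M,K,R,\Theta)}=\frac1R\big[\frac{\alpha K}{M-K}(2^{R/K}-1)+M\rho_r+K\rho_d+\rho_s\big]$. $(M'_{csi}(R,\Theta),K'_{csi}(R,\Theta))$ denotes the maximizer (which exists and is unique) of $\zeta_{csi}(M,K,R,\Theta)$ over real $(M,K)$ with $1\le K\le\min\big(\frac T4,\frac{\rho_r}{3\rho_0},\frac{3\rho_d}{2\rho_0}\big)$, $M>K$. *)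

theory Defs
  imports Complex_Main
begin

definition g :: "real \<Rightarrow> real" where
  "g x = sqrt (x / (2 powr x - 1)) * (2 powr x * x * ln 2 - 2 powr x + 1)"

type_synonym params = "real \<times> real \<times> real \<times> real \<times> real \<times> real"

definition zeta_csi :: "real \<Rightarrow> real \<Rightarrow> real \<Rightarrow> params \<Rightarrow> real" where
  "zeta_csi M K R \<Theta> = (case \<Theta> of (\<alpha>, \<rho>r, \<rho>d, \<rho>s, \<rho>0, T) \<Rightarrow>
     1 / ((1 / R) * (\<alpha> * K / (M - K) * (2 powr (R / K) - 1) + M * \<rho>r + K * \<rho>d + \<rho>s)))"

definition feasible_csi :: "params \<Rightarrow> (real \<times> real) set" where
  "feasible_csi \<Theta> = (case \<Theta> of (\<alpha>, \<rho>r, \<rho>d, \<rho>s, \<rho>0, T) \<Rightarrow>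
     {(M, K). 1 \<le> K \<and> K \<le> min (T / 4) (min (\<rho>r / (3 * \<rho>0)) (3 * \<rho>d / (2 * \<rho>0))) \<and> M > K})"

definition opt_csi :: "real \<Rightarrow> params \<Rightarrow> real \<times> real" where
  "opt_csi R \<Theta> = (THE p. p \<in> feasible_csi \<Theta> \<and>
       (\<forall>q \<in> feasible_csi \<Theta>. zeta_csi (fst q) (snd q) R \<Theta> \<le> zeta_csi (fst p) (snd p) R \<Theta>))"

definition M'_csi :: "real \<Rightarrow> params \<Rightarrow> real" where "M'_csi R \<Theta> = fst (opt_csi R \<Theta>)"
definition K'_csi :: "real \<Rightarrow> params \<Rightarrow> real" where "K'_csi R \<Theta> = snd (opt_csi R \<Theta>)"

end

theory Submission
  imports Defs
begin

text \<open>
  Write \<open>h K = K * (2 powr (R / K) - 1)\<close>. Then \<open>R / zeta_csi M K R \<Theta>\<close> is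
  \<open>\<alpha> h K / (M - K) + \<rho>r (M - K) + (\<rho>r + \<rho>d) K + \<rho>s\<close>; completing the square in \<open>M - K\<close>
  shows that for fixed \<open>K\<close> the best gap is \<open>sqrt (\<alpha> h K / \<rho>r)\<close>, leaving the reduced cost
  \<open>F K = 2 sqrt (\<alpha> \<rho>r h K) + (\<rho>r + \<rho>d) K\<close>. Its derivative is
  \<open>(\<rho>r + \<rho>d) - sqrt (\<alpha> \<rho>r / R) g (R / K)\<close>, and \<open>g\<close> is strictly increasing, so \<open>F\<close> has a
  unique minimiser \<open>K'\<close>, the solution of \<open>g (R / K') = (1 + \<beta>) sqrt (\<rho>r R / \<alpha>)\<close>. The bounds
  defining \<open>I\<close> put this level between \<open>g (R / Kmax)\<close> and \<open>g R\<close>, so \<open>K'\<close> is feasible.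
  The level grows with \<open>\<rho>r\<close>, hence \<open>K'\<close> shrinks; and at \<open>K'\<close> the optimal gap equals
  \<open>(1 + \<beta>) R ln 2 / p (R ln 2 / K')\<close> with \<open>p\<close> increasing, so \<open>M'\<close> is an increasing function
  of \<open>K'\<close>.
\<close>

lemma DERIV_pos_imp_strict_mono_on:
  fixes f f' :: "real \<Rightarrow> real"
  assumes "\<And>x. c < x \<Longrightarrow> (f has_real_derivative f' x) (at x)"
    and "\<And>x. c < x \<Longrightarrow> f' x > 0"
  shows "strict_mono_on {c<..} f"
proof (rule strict_mono_onI)
  fix a b assume "a \<in> {c<..}" "a < b"
  show "f a < f b"
  proof (rule DERIV_pos_imp_increasing[OF \<open>a < b\<close>])
    fix x assume "a \<le> x" "x \<le> b"
    with \<open>a \<in> {c<..}\<close> have "c < x" by simp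
    with assms show "\<exists>y. (f has_real_derivative y) (at x) \<and> 0 < y" by blast
  qed
qed

lemma DERIV_sign_change_imp_strict_min:
  fixes f f' :: "real \<Rightarrow> real"
  assumes deriv: "\<And>x. c < x \<Longrightarrow> (f has_real_derivative f' x) (at x)"
    and neg: "\<And>x. c < x \<Longrightarrow> x < x0 \<Longrightarrow> f' x < 0"
    and pos: "\<And>x. x0 < x \<Longrightarrow> f' x > 0"
    and "c < x0" "c < x" "x \<noteq> x0"
  shows "f x0 < f x"
proof -
  have cont: "continuous_on {a..b} f" if "c < a" for a b
  proof (rule DERIV_atLeastAtMost_imp_continuous_on)
    fix y assume "a \<le> y" "y \<le> b"
    with that have "c < y" by simp
    with deriv show "\<exists>z. (f has_real_derivative z) (at y)" by blast
  qed
  consider "x < x0" | "x0 < x" using \<open>x \<noteq> x0\<close> by linarith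
  then show ?thesis
  proof cases
    case 1
    show ?thesis
    proof (rule DERIV_neg_imp_decreasing_open[OF 1 _ cont])
      fix y assume "x < y" "y < x0"
      with \<open>c < x\<close> have "c < y" by simp
      with deriv neg \<open>y < x0\<close> show "\<exists>z. (f has_real_derivative z) (at y) \<and> z < 0" by blast
    qed (fact \<open>c < x\<close>)
  next
    case 2
    show ?thesis
    proof (rule DERIV_pos_imp_increasing_open[OF 2 _ cont])
      fix y assume "x0 < y" "y < x"
      with \<open>c < x0\<close> have "c < y" by simp
      with deriv pos \<open>x0 < y\<close> show "\<exists>z. (f has_real_derivative z) (at y) \<and> 0 < z" by blast
    qed (fact \<open>c < x0\<close>)
  qed
qed

lemma one_plus_less_exp: "u \<noteq> 0 \<Longrightarrow> 1 + u < exp (u::real)"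
  using exp_minus_greater[of "-u"] by simp

text \<open>The substitution \<open>u = x ln 2\<close> turns the base-2 expressions in \<open>g\<close> into these.\<close>

definition q_exp :: "real \<Rightarrow> real" where
  "q_exp u = u * exp u - exp u + 1"

definition w_exp :: "real \<Rightarrow> real" where
  "w_exp u = q_exp u ^ 2 / (exp u - 1)"

definition p_exp :: "real \<Rightarrow> real" where
  "p_exp u = u * q_exp u / (exp u - 1)"

lemma q_exp_pos: assumes "u > 0" shows "q_exp u > 0"
proof -
  have "exp u * (1 - u) < exp u * exp (-u)"
    using exp_minus_greater[of u] assms by simp
  then show ?thesis
    by (simp add: q_exp_def exp_minus algebra_simps)
qed

lemma has_real_derivative_q_exp: "(q_exp has_real_derivative u * exp u) (at u)"
  unfolding q_exp_def[abs_def] by (auto intro!: derivative_eq_intros)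

lemma w_exp_pos: "u > 0 \<Longrightarrow> w_exp u > 0"
  unfolding w_exp_def using q_exp_pos[of u] by simp

lemma p_exp_pos: "u > 0 \<Longrightarrow> p_exp u > 0"
  unfolding p_exp_def using q_exp_pos[of u] by simp

lemma strict_mono_on_w_exp: "strict_mono_on {0<..} w_exp"
proof (rule DERIV_pos_imp_strict_mono_on)
  fix u :: real assume u: "0 < u"
  have "exp u - 1 \<noteq> 0" using u by simp
  then have "(w_exp has_real_derivative
      (2 * q_exp u * (u * exp u) * (exp u - 1) - q_exp u ^ 2 * exp u) / (exp u - 1) ^ 2) (at u)"
    unfolding w_exp_def[abs_def]
    by (auto intro!: derivative_eq_intros has_real_derivative_q_exp simp: power2_eq_square)
  moreover have "2 * q_exp u * (u * exp u) * (exp u - 1) - q_exp u ^ 2 * exp u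
      = q_exp u * exp u * ((1 + u) * (exp u - 1 - u) + u ^ 2)"
    by (simp add: q_exp_def power2_eq_square algebra_simps)
  ultimately show "(w_exp has_real_derivative
      q_exp u * exp u * ((1 + u) * (exp u - 1 - u) + u ^ 2) / (exp u - 1) ^ 2) (at u)"
    by simp
  have "(1 + u) * (exp u - 1 - u) + u ^ 2 > 0"
    using one_plus_less_exp[of u] u by (intro add_pos_pos mult_pos_pos) auto
  then show "q_exp u * exp u * ((1 + u) * (exp u - 1 - u) + u ^ 2) / (exp u - 1) ^ 2 > 0"
    using q_exp_pos[OF u] u by simp
qed

lemma exp_minus_one_square_bound:
  fixes u :: real assumes "u > 0"
  shows "(exp u - 1) ^ 2 + u ^ 2 * exp u < 2 * u * exp u * (exp u - 1)"
proof -
  define f where "f x = 2 * x * exp x * (exp x - 1) - (exp x - 1) ^ 2 - x ^ 2 * exp x" for x :: real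
  have "f 0 < f u"
  proof (rule DERIV_pos_imp_increasing_open[OF assms])
    fix x :: real assume x: "0 < x" "x < u"
    have "(f has_real_derivative x * exp x * (4 * (exp x - 1) - x)) (at x)"
      unfolding f_def[abs_def]
      by (auto intro!: derivative_eq_intros simp: power2_eq_square) (simp add: algebra_simps)
    moreover have "x * exp x * (4 * (exp x - 1) - x) > 0"
      using one_plus_less_exp[of x] x by simp
    ultimately show "\<exists>y. (f has_real_derivative y) (at x) \<and> 0 < y" by blast
  qed (simp add: f_def continuous_intros)
  then show ?thesis by (simp add: f_def)
qed

lemma strict_mono_on_p_exp: "strict_mono_on {0<..} p_exp"
proof (rule DERIV_pos_imp_strict_mono_on)
  fix u :: real assume u: "0 < u"
  have "exp u - 1 \<noteq> 0" using u by simp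
  then have "(p_exp has_real_derivative
      ((q_exp u + u * (u * exp u)) * (exp u - 1) - u * q_exp u * exp u) / (exp u - 1) ^ 2) (at u)"
    unfolding p_exp_def[abs_def]
    by (auto intro!: derivative_eq_intros has_real_derivative_q_exp simp: power2_eq_square)
  moreover have "(q_exp u + u * (u * exp u)) * (exp u - 1) - u * q_exp u * exp u
      = 2 * u * exp u * (exp u - 1) - ((exp u - 1) ^ 2 + u ^ 2 * exp u)"
    by (simp add: q_exp_def power2_eq_square algebra_simps)
  ultimately show "(p_exp has_real_derivative
      (2 * u * exp u * (exp u - 1) - ((exp u - 1) ^ 2 + u ^ 2 * exp u)) / (exp u - 1) ^ 2) (at u)"
    by simp
  show "(2 * u * exp u * (exp u - 1) - ((exp u - 1) ^ 2 + u ^ 2 * exp u)) / (exp u - 1) ^ 2 > 0"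
    using exp_minus_one_square_bound[OF u] u by simp
qed

lemma g_eq_sqrt_w_exp: assumes "x > 0" shows "g x = sqrt (x * w_exp (x * ln 2))"
proof -
  have "2 powr x * x * ln 2 - 2 powr x + 1 = q_exp (x * ln 2)"
    by (simp add: powr_def q_exp_def algebra_simps)
  then have "g x = sqrt (x / (exp (x * ln 2) - 1)) * sqrt (q_exp (x * ln 2) ^ 2)"
    using q_exp_pos[of "x * ln 2"] assms by (simp add: g_def powr_def)
  also have "\<dots> = sqrt (x / (exp (x * ln 2) - 1) * q_exp (x * ln 2) ^ 2)"
    by (rule real_sqrt_mult[symmetric])
  also have "\<dots> = sqrt (x * w_exp (x * ln 2))"
    by (simp add: w_exp_def)
  finally show ?thesis .
qed

lemma g_nonneg: "x > 0 \<Longrightarrow> g x \<ge> 0"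
  using g_eq_sqrt_w_exp[of x] w_exp_pos[of "x * ln 2"] by simp

lemma g_square: "x > 0 \<Longrightarrow> g x ^ 2 = x * w_exp (x * ln 2)"
  using g_eq_sqrt_w_exp[of x] w_exp_pos[of "x * ln 2"] by simp

lemma strict_mono_on_g: "strict_mono_on {0<..} g"
proof (rule strict_mono_onI)
  fix x y :: real assume "x \<in> {0<..}" "x < y"
  then have "w_exp (x * ln 2) < w_exp (y * ln 2)" and "w_exp (x * ln 2) > 0"
    using strict_mono_on_w_exp w_exp_pos by (auto simp: strict_mono_on_def)
  with \<open>x \<in> {0<..}\<close> \<open>x < y\<close> have "x * w_exp (x * ln 2) < y * w_exp (y * ln 2)"
    by (intro mult_strict_mono) auto
  with \<open>x \<in> {0<..}\<close> \<open>x < y\<close> show "g x < g y"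
    by (simp add: g_eq_sqrt_w_exp)
qed

lemma g_square_superlinear:
  assumes "x > 0" "t \<ge> 1" shows "t * g x ^ 2 \<le> g (t * x) ^ 2"
proof -
  have "w_exp (x * ln 2) \<le> w_exp (t * x * ln 2)"
    using assms strict_mono_on_leD[OF strict_mono_on_w_exp] by auto
  then show ?thesis
    using assms by (simp add: g_square mult_mono)
qed

lemma continuous_on_g: "continuous_on {0<..} g"
  unfolding g_def by (intro continuous_intros) auto

definition rate_cost :: "real \<Rightarrow> real \<Rightarrow> real" where
  "rate_cost R K = K * (2 powr (R / K) - 1)"

lemma rate_cost_pos: "R > 0 \<Longrightarrow> K > 0 \<Longrightarrow> rate_cost R K > 0"
  by (simp add: rate_cost_def)

lemma has_real_derivative_rate_cost:
  assumes "K > 0" shows "(rate_cost R has_real_derivative - q_exp (R / K * ln 2)) (at K)"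
proof -
  have "((\<lambda>K. K * (exp (R / K * ln 2) - 1)) has_real_derivative - q_exp (R / K * ln 2)) (at K)"
    using assms by (auto intro!: derivative_eq_intros simp: q_exp_def; simp add: field_simps power2_eq_square)
  then show ?thesis by (simp add: rate_cost_def[abs_def] powr_def)
qed

lemma g_mult_sqrt_rate_cost:
  assumes "R > 0" "K > 0"
  shows "g (R / K) * sqrt (rate_cost R K) = sqrt R * q_exp (R / K * ln 2)"
proof -
  have "R / K > 0" using assms by simp
  then have "g (R / K) * sqrt (rate_cost R K)
      = sqrt (R / K * w_exp (R / K * ln 2)) * sqrt (rate_cost R K)"
    by (simp only: g_eq_sqrt_w_exp)
  also have "\<dots> = sqrt (R / K * w_exp (R / K * ln 2) * rate_cost R K)"
    by (rule real_sqrt_mult[symmetric])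
  also have "R / K * w_exp (R / K * ln 2) * rate_cost R K = R * q_exp (R / K * ln 2) ^ 2"
    using assms by (simp add: w_exp_def rate_cost_def powr_def)
  finally show ?thesis
    using assms q_exp_pos[of "R / K * ln 2"] by (simp add: real_sqrt_mult)
qed

lemma has_real_derivative_sqrt_rate_cost:
  assumes "R > 0" "K > 0"
  shows "((\<lambda>K. sqrt (rate_cost R K)) has_real_derivative - g (R / K) / (2 * sqrt R)) (at K)"
proof -
  have h: "rate_cost R K > 0" using assms by (rule rate_cost_pos)
  have "inverse (sqrt (rate_cost R K)) / 2 * - q_exp (R / K * ln 2) = - g (R / K) / (2 * sqrt R)"
    using g_mult_sqrt_rate_cost[OF assms] h assms by (simp add: field_simps)
  with DERIV_chain2[OF DERIV_real_sqrt[OF h] has_real_derivative_rate_cost[OF assms(2)]]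
  show ?thesis by (simp only: o_def)
qed

definition csi_gap :: "real \<Rightarrow> real \<Rightarrow> real \<Rightarrow> real \<Rightarrow> real" where
  "csi_gap \<alpha> \<rho>r R K = sqrt (\<alpha> * rate_cost R K / \<rho>r)"

definition csi_reduced_cost :: "real \<Rightarrow> real \<Rightarrow> real \<Rightarrow> real \<Rightarrow> real \<Rightarrow> real" where
  "csi_reduced_cost \<alpha> \<rho>r \<rho>d R K = 2 * sqrt (\<alpha> * \<rho>r) * sqrt (rate_cost R K) + (\<rho>r + \<rho>d) * K"

lemma csi_gap_pos: "\<alpha> > 0 \<Longrightarrow> \<rho>r > 0 \<Longrightarrow> R > 0 \<Longrightarrow> K > 0 \<Longrightarrow> csi_gap \<alpha> \<rho>r R K > 0"
  by (simp add: csi_gap_def rate_cost_pos)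

lemma csi_bracket_eq:
  assumes "\<alpha> \<ge> 0" "\<rho>r > 0" "R > 0" "0 < K" "K < M"
  shows "\<alpha> * K / (M - K) * (2 powr (R / K) - 1) + M * \<rho>r + K * \<rho>d + \<rho>s
    = \<rho>r * (csi_gap \<alpha> \<rho>r R K - (M - K)) ^ 2 / (M - K) + csi_reduced_cost \<alpha> \<rho>r \<rho>d R K + \<rho>s"
proof -
  define h where "h = rate_cost R K"
  define s where "s = csi_gap \<alpha> \<rho>r R K"
  have h: "h > 0" using assms by (simp add: h_def rate_cost_pos)
  have "\<rho>r * s ^ 2 = \<alpha> * h"
    using assms h by (simp add: s_def csi_gap_def h_def)
  then have square: "\<rho>r * (s - (M - K)) ^ 2 / (M - K) = \<alpha> * h / (M - K) - 2 * (\<rho>r * s) + \<rho>r * (M - K)"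
    using assms by (simp add: field_simps power2_eq_square)
  have "\<rho>r * s = sqrt (\<rho>r ^ 2) * s"
    using assms by simp
  also have "\<dots> = sqrt (\<rho>r ^ 2 * (\<alpha> * h / \<rho>r))"
    unfolding s_def csi_gap_def h_def by (rule real_sqrt_mult[symmetric])
  also have "\<dots> = sqrt (\<alpha> * \<rho>r) * sqrt h"
    using assms by (simp add: real_sqrt_mult[symmetric] power2_eq_square)
  finally have cross: "2 * sqrt (\<alpha> * \<rho>r) * sqrt h = 2 * (\<rho>r * s)" by simp
  have "\<alpha> * K / (M - K) * (2 powr (R / K) - 1) = \<alpha> * h / (M - K)"
    by (simp add: h_def rate_cost_def)
  then show ?thesis
    unfolding csi_reduced_cost_def s_def[symmetric] h_def[symmetric] square cross
    by (simp add: algebra_simps)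
qed

lemma has_real_derivative_csi_reduced_cost:
  assumes "R > 0" "K > 0"
  shows "(csi_reduced_cost \<alpha> \<rho>r \<rho>d R has_real_derivative
    (\<rho>r + \<rho>d) - sqrt (\<alpha> * \<rho>r) * g (R / K) / sqrt R) (at K)"
proof -
  have "(csi_reduced_cost \<alpha> \<rho>r \<rho>d R has_real_derivative
      2 * sqrt (\<alpha> * \<rho>r) * (- g (R / K) / (2 * sqrt R)) + (\<rho>r + \<rho>d) * 1) (at K)"
    unfolding csi_reduced_cost_def[abs_def]
    by (intro DERIV_add DERIV_cmult has_real_derivative_sqrt_rate_cost[OF assms] DERIV_ident)
  then show ?thesis by (simp add: algebra_simps)
qed

lemma csi_reduced_cost_strict_min:
  assumes "\<alpha> > 0" "\<rho>r > 0" "R > 0" "K0 > 0" "K > 0" "K \<noteq> K0"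
    and stationary: "sqrt (\<alpha> * \<rho>r) * g (R / K0) = (\<rho>r + \<rho>d) * sqrt R"
  shows "csi_reduced_cost \<alpha> \<rho>r \<rho>d R K0 < csi_reduced_cost \<alpha> \<rho>r \<rho>d R K"
proof -
  have slope: "(\<rho>r + \<rho>d) - sqrt (\<alpha> * \<rho>r) * g (R / x) / sqrt R
      = sqrt (\<alpha> * \<rho>r) / sqrt R * (g (R / K0) - g (R / x))" for x
    using stationary \<open>R > 0\<close> by (simp add: field_simps)
  have g_less: "g (R / y) < g (R / x)" if "0 < x" "x < y" for x y
    using strict_mono_onD[OF strict_mono_on_g] that \<open>R > 0\<close>
    by (simp add: divide_strict_left_mono)
  show ?thesis
  proof (rule DERIV_sign_change_imp_strict_min[where c = 0 and f = "csi_reduced_cost \<alpha> \<rho>r \<rho>d R"])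
    show "(csi_reduced_cost \<alpha> \<rho>r \<rho>d R has_real_derivative
        (\<rho>r + \<rho>d) - sqrt (\<alpha> * \<rho>r) * g (R / x) / sqrt R) (at x)" if "0 < x" for x
      using has_real_derivative_csi_reduced_cost[OF \<open>R > 0\<close> that] .
    show "(\<rho>r + \<rho>d) - sqrt (\<alpha> * \<rho>r) * g (R / x) / sqrt R < 0" if "0 < x" "x < K0" for x
      unfolding slope using g_less[OF that] assms by (intro mult_pos_neg) auto
    show "(\<rho>r + \<rho>d) - sqrt (\<alpha> * \<rho>r) * g (R / x) / sqrt R > 0" if "K0 < x" for x
      unfolding slope using g_less[OF \<open>K0 > 0\<close> that] assms by simp
  qed (use assms in auto)
qed

lemma zeta_csi_less_at_stationary:
  assumes "\<alpha> > 0" "\<rho>r > 0" "\<rho>s \<ge> 0" "R > 0" "K0 > 0" "0 < K" "K < M"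
    and "(M, K) \<noteq> (K0 + csi_gap \<alpha> \<rho>r R K0, K0)"
    and stationary: "sqrt (\<alpha> * \<rho>r) * g (R / K0) = (\<rho>r + \<rho>d) * sqrt R"
  shows "zeta_csi M K R (\<alpha>, \<rho>r, \<rho>d, \<rho>s, \<rho>0, T)
    < zeta_csi (K0 + csi_gap \<alpha> \<rho>r R K0) K0 R (\<alpha>, \<rho>r, \<rho>d, \<rho>s, \<rho>0, T)"
proof -
  define F where "F = csi_reduced_cost \<alpha> \<rho>r \<rho>d R"
  define B where "B M K = \<alpha> * K / (M - K) * (2 powr (R / K) - 1) + M * \<rho>r + K * \<rho>d + \<rho>s" for M K
  have zeta: "zeta_csi M K R (\<alpha>, \<rho>r, \<rho>d, \<rho>s, \<rho>0, T) = R / B M K" for M K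
    by (simp add: zeta_csi_def B_def)
  have gap: "csi_gap \<alpha> \<rho>r R K0 > 0" using assms by (simp add: csi_gap_pos)
  have B_eq: "B M' K' = \<rho>r * (csi_gap \<alpha> \<rho>r R K' - (M' - K')) ^ 2 / (M' - K') + F K' + \<rho>s"
    if "0 < K'" "K' < M'" for M' K'
    unfolding B_def F_def using assms that by (intro csi_bracket_eq) auto
  have B_opt: "B (K0 + csi_gap \<alpha> \<rho>r R K0) K0 = F K0 + \<rho>s"
    using B_eq[of K0 "K0 + csi_gap \<alpha> \<rho>r R K0"] assms gap by simp
  have "\<rho>r + \<rho>d \<ge> 0"
    using stationary g_nonneg[of "R / K0"] assms
    by (metis divide_pos_pos mult_nonneg_nonneg real_sqrt_ge_zero real_sqrt_gt_zero
        zero_le_mult_iff less_le_not_le)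
  then have "F K0 > 0"
    using assms rate_cost_pos[of R K0] by (simp add: F_def csi_reduced_cost_def add_pos_nonneg)
  have "F K0 + \<rho>s < B M K"
  proof (cases "K = K0")
    case True
    with assms have "csi_gap \<alpha> \<rho>r R K - (M - K) \<noteq> 0" by auto
    with assms True show ?thesis using B_eq[of K M] by simp
  next
    case False
    have "\<rho>r * (csi_gap \<alpha> \<rho>r R K - (M - K)) ^ 2 / (M - K) \<ge> 0" using assms by simp
    moreover have "F K0 < F K"
      using csi_reduced_cost_strict_min[OF assms(1,2,4,5,6) False stationary] by (simp add: F_def)
    ultimately show ?thesis using B_eq[of K M] assms by linarith
  qed
  with \<open>F K0 > 0\<close> \<open>\<rho>s \<ge> 0\<close> \<open>R > 0\<close> show ?thesis
    unfolding zeta B_opt by (simp add: divide_strict_left_mono)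
qed

lemma opt_csi_at_stationary:
  assumes "\<alpha> > 0" "\<rho>r > 0" "\<rho>s \<ge> 0" "R > 0" "1 \<le> K0"
    and "K0 \<le> min (T / 4) (min (\<rho>r / (3 * \<rho>0)) (3 * \<rho>d / (2 * \<rho>0)))"
    and stationary: "sqrt (\<alpha> * \<rho>r) * g (R / K0) = (\<rho>r + \<rho>d) * sqrt R"
  shows "opt_csi R (\<alpha>, \<rho>r, \<rho>d, \<rho>s, \<rho>0, T) = (K0 + csi_gap \<alpha> \<rho>r R K0, K0)"
proof -
  let ?\<Theta> = "(\<alpha>, \<rho>r, \<rho>d, \<rho>s, \<rho>0, T)"
  let ?p = "(K0 + csi_gap \<alpha> \<rho>r R K0, K0)"
  let ?z = "\<lambda>q. zeta_csi (fst q) (snd q) R ?\<Theta>"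
  have feasible: "?p \<in> feasible_csi ?\<Theta>"
    using assms csi_gap_pos[of \<alpha> \<rho>r R K0] by (simp add: feasible_csi_def)
  have better: "?z q < ?z ?p" if "q \<in> feasible_csi ?\<Theta>" "q \<noteq> ?p" for q
  proof -
    obtain M K where q: "q = (M, K)" by fastforce
    with that have "1 \<le> K" "K < M" "(M, K) \<noteq> ?p" by (auto simp: feasible_csi_def)
    with assms show ?thesis
      unfolding q fst_conv snd_conv by (intro zeta_csi_less_at_stationary) auto
  qed
  show ?thesis
    unfolding opt_csi_def
  proof (rule the_equality)
    show "?p \<in> feasible_csi ?\<Theta> \<and> (\<forall>q \<in> feasible_csi ?\<Theta>. ?z q \<le> ?z ?p)"
      using feasible better by (metis order.strict_implies_order order.refl)
  next
    fix p assume "p \<in> feasible_csi ?\<Theta> \<and> (\<forall>q \<in> feasible_csi ?\<Theta>. ?z q \<le> ?z p)"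
    with feasible better show "p = ?p" by (meson leD)
  qed
qed

lemma csi_gap_at_stationary:
  assumes "\<alpha> > 0" "\<rho>r > 0" "R > 0" "K0 > 0"
    and stationary: "sqrt (\<alpha> * \<rho>r) * g (R / K0) = (\<rho>r + \<rho>d) * sqrt R"
  shows "csi_gap \<alpha> \<rho>r R K0 = (1 + \<rho>d / \<rho>r) * R * ln 2 / p_exp (R / K0 * ln 2)"
proof -
  define u where "u = R / K0 * ln 2"
  define h where "h = rate_cost R K0"
  have u: "u > 0" and h: "h > 0" and q: "q_exp u > 0"
    using assms rate_cost_pos q_exp_pos by (auto simp: u_def h_def)
  have "sqrt (\<alpha> * \<rho>r) * (sqrt R * q_exp u) = sqrt (\<alpha> * \<rho>r) * g (R / K0) * sqrt h"
    using g_mult_sqrt_rate_cost[OF assms(3,4)] by (simp add: u_def h_def mult.assoc)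
  also have "\<dots> = (\<rho>r + \<rho>d) * sqrt R * sqrt h"
    by (simp only: stationary)
  finally have key: "sqrt (\<alpha> * \<rho>r) * q_exp u = (\<rho>r + \<rho>d) * sqrt h"
    using assms by (simp add: ac_simps)
  have "\<alpha> * h / \<rho>r = \<alpha> * \<rho>r * h / \<rho>r ^ 2"
    using assms by (simp add: power2_eq_square)
  then have "csi_gap \<alpha> \<rho>r R K0 = sqrt (\<alpha> * \<rho>r) * sqrt h / \<rho>r"
    using assms by (simp add: csi_gap_def h_def real_sqrt_mult real_sqrt_divide)
  also have "\<dots> = (1 + \<rho>d / \<rho>r) * (h / q_exp u)"
    using key h q assms by (simp add: field_simps)
  also have "h / q_exp u = R * ln 2 / p_exp u"
    using assms u q by (simp add: h_def rate_cost_def powr_def p_exp_def u_def field_simps)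
  finally show ?thesis by (simp add: u_def)
qed

lemma mono_on_add_div_p_exp:
  assumes "c \<ge> 0" "R > 0"
  shows "mono_on {0<..} (\<lambda>K. K + c * R * ln 2 / p_exp (R / K * ln 2))"
proof (rule mono_onI)
  fix K K' :: real assume "K \<in> {0<..}" "K' \<in> {0<..}" "K \<le> K'"
  then have pos: "p_exp (R / K * ln 2) > 0" "p_exp (R / K' * ln 2) > 0"
    using assms by (simp_all add: p_exp_pos)
  have "p_exp (R / K' * ln 2) \<le> p_exp (R / K * ln 2)"
    using \<open>K \<in> {0<..}\<close> \<open>K \<le> K'\<close> assms strict_mono_on_leD[OF strict_mono_on_p_exp]
    by (simp add: frac_le)
  with pos assms \<open>K \<le> K'\<close> show "K + c * R * ln 2 / p_exp (R / K * ln 2)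
      \<le> K' + c * R * ln 2 / p_exp (R / K' * ln 2)"
    by (intro add_mono divide_left_mono) simp_all
qed

lemma g_div_attains_level:
  assumes "R > 0" "1 \<le> Kmax" "g (R / Kmax) \<le> c" "c \<le> g R"
  obtains K0 where "1 \<le> K0" "K0 \<le> Kmax" "g (R / K0) = c"
proof -
  have "continuous_on {1..Kmax} (\<lambda>K. g (R / K))"
    using \<open>R > 0\<close>
    by (intro continuous_on_compose2[OF continuous_on_g] continuous_intros) auto
  then show ?thesis
    using IVT2'[of "\<lambda>K. g (R / K)" Kmax c 1] assms that by auto
qed

lemma scaled_level_within_g_range:
  assumes "\<alpha> > 0" "R > 0" "\<beta> > 0" "\<rho> > 0" "Kmax > 0"
    and low: "\<rho> > 3 * \<alpha> / (4 * (1 + \<beta>) ^ 2 * R) * g (4 * R / (3 * Kmax)) ^ 2"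
    and up: "\<rho> < \<alpha> / (1 + \<beta>) ^ 2 * g R ^ 2 / R"
  shows "g (R / Kmax) \<le> (1 + \<beta>) * sqrt (\<rho> * R / \<alpha>)"
    and "(1 + \<beta>) * sqrt (\<rho> * R / \<alpha>) \<le> g R"
proof -
  define c where "c = (1 + \<beta>) * sqrt (\<rho> * R / \<alpha>)"
  have "c \<ge> 0" using assms by (simp add: c_def)
  have c_square: "c ^ 2 = (1 + \<beta>) ^ 2 * \<rho> * R / \<alpha>"
    using assms by (simp add: c_def power_mult_distrib)
  have "4 / 3 * g (R / Kmax) ^ 2 \<le> g (4 * R / (3 * Kmax)) ^ 2"
    using g_square_superlinear[of "R / Kmax" "4 / 3"] assms by simp
  also have "\<dots> < 4 / 3 * c ^ 2"
  proof -
    have "3 * \<alpha> * g (4 * R / (3 * Kmax)) ^ 2 < \<rho> * (4 * (1 + \<beta>) ^ 2 * R)"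
      using low assms by (simp add: field_simps)
    then show ?thesis
      unfolding c_square using assms by (simp add: field_simps)
  qed
  finally have "g (R / Kmax) ^ 2 \<le> c ^ 2" by simp
  then have "g (R / Kmax) \<le> c" using \<open>c \<ge> 0\<close> by (rule power2_le_imp_le)
  then show "g (R / Kmax) \<le> (1 + \<beta>) * sqrt (\<rho> * R / \<alpha>)"
    by (simp add: c_def)
  have "\<rho> * ((1 + \<beta>) ^ 2 * R) < \<alpha> * g R ^ 2"
    using up assms by (simp add: field_simps)
  then have "c ^ 2 \<le> g R ^ 2"
    unfolding c_square using assms by (simp add: field_simps)
  then have "c \<le> g R" using g_nonneg[OF \<open>R > 0\<close>] by (rule power2_le_imp_le)
  then show "(1 + \<beta>) * sqrt (\<rho> * R / \<alpha>) \<le> g R"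
    by (simp add: c_def)
qed

lemma csi_optimum_scaled_params:
  assumes "\<alpha> > 0" "R > 0" "\<beta> > 0" "\<delta> > 0" "\<mu> > 0" "\<rho> > 0"
    and Kmax: "Kmax = min (T / 4) (min (1 / (3 * \<mu>)) (3 * \<beta> / (2 * \<mu>)))" "1 \<le> Kmax"
    and "\<rho> > 3 * \<alpha> / (4 * (1 + \<beta>) ^ 2 * R) * g (4 * R / (3 * Kmax)) ^ 2"
    and "\<rho> < \<alpha> / (1 + \<beta>) ^ 2 * g R ^ 2 / R"
  obtains K where "K > 0" "g (R / K) = (1 + \<beta>) * sqrt (\<rho> * R / \<alpha>)"
    "K'_csi R (\<alpha>, \<rho>, \<beta> * \<rho>, \<delta> * \<rho>, \<mu> * \<rho>, T) = K"
    "M'_csi R (\<alpha>, \<rho>, \<beta> * \<rho>, \<delta> * \<rho>, \<mu> * \<rho>, T) = K + (1 + \<beta>) * R * ln 2 / p_exp (R / K * ln 2)"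
proof -
  have "Kmax > 0" using Kmax(2) by linarith
  with assms obtain K where K: "1 \<le> K" "K \<le> Kmax"
    and level: "g (R / K) = (1 + \<beta>) * sqrt (\<rho> * R / \<alpha>)"
    using g_div_attains_level[OF \<open>R > 0\<close> Kmax(2)] scaled_level_within_g_range[of \<alpha> R \<beta> \<rho> Kmax]
    by metis
  have "\<alpha> * \<rho> * (\<rho> * R / \<alpha>) = \<rho> ^ 2 * R"
    using assms by (simp add: power2_eq_square)
  then have "sqrt (\<alpha> * \<rho>) * sqrt (\<rho> * R / \<alpha>) = sqrt (\<rho> ^ 2 * R)"
    by (simp only: real_sqrt_mult[symmetric])
  also have "\<dots> = \<rho> * sqrt R"
    using assms by (simp add: real_sqrt_mult)
  finally have "sqrt (\<alpha> * \<rho>) * sqrt (\<rho> * R / \<alpha>) = \<rho> * sqrt R" .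
  then have stationary: "sqrt (\<alpha> * \<rho>) * g (R / K) = (\<rho> + \<beta> * \<rho>) * sqrt R"
    unfolding level by (simp add: algebra_simps)
  have "min (T / 4) (min (\<rho> / (3 * (\<mu> * \<rho>))) (3 * (\<beta> * \<rho>) / (2 * (\<mu> * \<rho>)))) = Kmax"
    using assms by simp
  with K assms stationary
  have "opt_csi R (\<alpha>, \<rho>, \<beta> * \<rho>, \<delta> * \<rho>, \<mu> * \<rho>, T) = (K + csi_gap \<alpha> \<rho> R K, K)"
    by (intro opt_csi_at_stationary) auto
  moreover have "csi_gap \<alpha> \<rho> R K = (1 + \<beta>) * R * ln 2 / p_exp (R / K * ln 2)"
    using csi_gap_at_stationary[OF assms(1,6,2) _ stationary] K assms by simp
  ultimately show ?thesis using that K level by (simp add: K'_csi_def M'_csi_def)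
qed

theorem theorem6:
  fixes \<alpha> R T \<beta> \<delta> \<mu> Kmax :: real
  assumes "\<alpha> > 1" "R > 0" "T > 1" "\<beta> > 0" "\<delta> > 0" "\<mu> > 0"
    and Kmax_def: "Kmax = min (T / 4) (min (1 / (3 * \<mu>)) (3 * \<beta> / (2 * \<mu>)))"
    and "Kmax > 10"
  defines "\<Theta> \<equiv> (\<lambda>\<rho>r::real. (\<alpha>, \<rho>r, \<beta> * \<rho>r, \<delta> * \<rho>r, \<mu> * \<rho>r, T))"
    and "I \<equiv> {\<rho>r::real. \<rho>r > 0 \<and> \<rho>r > \<alpha> / (2 * \<delta>)
              \<and> \<rho>r > 3 * \<alpha> / (4 * (1 + \<beta>)^2 * R) * (g (4 * R / (3 * Kmax)))^2
              \<and> \<rho>r < \<alpha> / (1 + \<beta>)^2 * (g R)^2 / R}"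
  shows "\<forall>\<rho>1 \<in> I. \<forall>\<rho>2 \<in> I. \<rho>1 < \<rho>2 \<longrightarrow>
           K'_csi R (\<Theta> \<rho>2) \<le> K'_csi R (\<Theta> \<rho>1) \<and> M'_csi R (\<Theta> \<rho>2) \<le> M'_csi R (\<Theta> \<rho>1)"
proof (intro ballI impI)
  fix \<rho>1 \<rho>2 assume "\<rho>1 \<in> I" "\<rho>2 \<in> I" "\<rho>1 < \<rho>2"
  have "\<alpha> > 0" "1 \<le> Kmax" using \<open>\<alpha> > 1\<close> \<open>Kmax > 10\<close> by simp_all
  note opt = csi_optimum_scaled_params[OF \<open>\<alpha> > 0\<close> assms(2,4,5,6) _ Kmax_def \<open>1 \<le> Kmax\<close>]
  obtain K1 where K1: "K1 > 0" "g (R / K1) = (1 + \<beta>) * sqrt (\<rho>1 * R / \<alpha>)"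
    "K'_csi R (\<Theta> \<rho>1) = K1" "M'_csi R (\<Theta> \<rho>1) = K1 + (1 + \<beta>) * R * ln 2 / p_exp (R / K1 * ln 2)"
    using opt[of \<rho>1] \<open>\<rho>1 \<in> I\<close> unfolding I_def \<Theta>_def mem_Collect_eq by blast
  obtain K2 where K2: "K2 > 0" "g (R / K2) = (1 + \<beta>) * sqrt (\<rho>2 * R / \<alpha>)"
    "K'_csi R (\<Theta> \<rho>2) = K2" "M'_csi R (\<Theta> \<rho>2) = K2 + (1 + \<beta>) * R * ln 2 / p_exp (R / K2 * ln 2)"
    using opt[of \<rho>2] \<open>\<rho>2 \<in> I\<close> unfolding I_def \<Theta>_def mem_Collect_eq by blast
  have "g (R / K1) < g (R / K2)"
    unfolding K1(2) K2(2) using \<open>\<rho>1 < \<rho>2\<close> assms by (simp add: divide_strict_right_mono)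
  moreover have "R / K1 \<in> {0<..}" "R / K2 \<in> {0<..}"
    using K1 K2 \<open>R > 0\<close> by simp_all
  ultimately have "R / K1 < R / K2"
    using strict_mono_on_less[OF strict_mono_on_g] by blast
  then have "K2 \<le> K1"
    using K1 K2 assms by (simp add: field_simps)
  then show "K'_csi R (\<Theta> \<rho>2) \<le> K'_csi R (\<Theta> \<rho>1) \<and> M'_csi R (\<Theta> \<rho>2) \<le> M'_csi R (\<Theta> \<rho>1)"
    using mono_onD[OF mono_on_add_div_p_exp[of "1 + \<beta>" R]] K1 K2 assms by simp
qed

end
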